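(* Let $k\ge 2$, $q\in\{1,\dots,k-1\}$, $n\ge 3$ and $i\ge 1$ be integers, and let $\alpha(k)$ be the restricted period of the Fibonacci sequence modulo $k$. Consider the cylindrical Lights Out game on a board with $i$ rows and $n$ columns whose lights have $k$ states, with every light initially in the same state $k-q$. If $i\equiv 0 \pmod{\alpha(k)}$ or $i\equiv -1 \pmod{\alpha(k)}$, then the game is one-pass solvable.
   Context: Fibonacci numbers: $F_0=0$, $F_1=1$, $F_i=F_{i-1}+F_{i-2}$. The restricted period $\alpha(k)$ is the least positive integer $m$ such that $F_m\equiv 0\pmod k$. Cylindrical Lights Out game: a grid of buttons with $i$ rows (numbered $1,\dots,i$ from top to bottom) and $n$ columns, whose left and right sides are identified, so column $1$ and column $n$ are adjacent; rows do not wrap around. Each button has a light whose state is an element of $\mathbb{Z}/k\mathbb{Z}$, state $0$ meaning "off". Pressing a button once adds $1 \pmod k$ to the state of its own light and to the states of the lights orthogonally adjacent to it (above, below, left, right, where they exist, with columns taken cyclically). One-pass chasing: for $r=2,3,\dots,i$ in turn, press each button in row $r$ the number of times in $\{0,\dots,k-1\}$ needed to bring the light directly above it (in row $r-1$) to state $0$. The game is one-pass solvable if after this procedure all lights on the board are in state $0$. *)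

theory Defs
  imports "HOL-Number_Theory.Fib"
begin

definition restricted_period :: "nat \<Rightarrow> nat" where
  "restricted_period k = (LEAST m. m > 0 \<and> k dvd fib m)"

definition affects :: "nat \<Rightarrow> nat \<Rightarrow> nat \<Rightarrow> nat \<Rightarrow> nat \<Rightarrow> nat \<Rightarrow> bool" where
  "affects i n r c r' c' \<longleftrightarrow>
     r \<in> {1..i} \<and> r' \<in> {1..i} \<and> c < n \<and> c' < n \<and>
     ((r' = r \<and> c' = c) \<or>
      (c' = c \<and> (r' = r + 1 \<or> r = r' + 1)) \<or>
      (r' = r \<and> (c' = (c + 1) mod n \<or> c = (c' + 1) mod n)))"

definition apply_presses ::
  "nat \<Rightarrow> nat \<Rightarrow> nat \<Rightarrow> (nat \<Rightarrow> nat \<Rightarrow> int) \<Rightarrow> (nat \<Rightarrow> nat \<Rightarrow> int) \<Rightarrow> nat \<Rightarrow> nat \<Rightarrow> int" where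
  "apply_presses k i n P s = (\<lambda>r' c'.
     (s r' c' + (\<Sum>r\<in>{1..i}. \<Sum>c<n. if affects i n r c r' c' then P r c else 0)) mod int k)"

text \<open>Presses in row r chosen in {0..k-1} to turn off the lights in row r-1.\<close>
definition chase_row_presses ::
  "nat \<Rightarrow> nat \<Rightarrow> (nat \<Rightarrow> nat \<Rightarrow> int) \<Rightarrow> nat \<Rightarrow> nat \<Rightarrow> int" where
  "chase_row_presses k r s = (\<lambda>r'' c. if r'' = r then (- s (r - 1) c) mod int k else 0)"

text \<open>Board state after chasing rows 2, ..., m+1.\<close>
fun chase_state ::
  "nat \<Rightarrow> nat \<Rightarrow> nat \<Rightarrow> (nat \<Rightarrow> nat \<Rightarrow> int) \<Rightarrow> nat \<Rightarrow> (nat \<Rightarrow> nat \<Rightarrow> int)" where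
  "chase_state k i n s 0 = s"
| "chase_state k i n s (Suc m) =
     (let st = chase_state k i n s m in
      apply_presses k i n (chase_row_presses k (m + 2) st) st)"

definition one_pass_solvable ::
  "nat \<Rightarrow> nat \<Rightarrow> nat \<Rightarrow> (nat \<Rightarrow> nat \<Rightarrow> int) \<Rightarrow> bool" where
  "one_pass_solvable k i n s \<longleftrightarrow>
     (\<forall>r\<in>{1..i}. \<forall>c<n. chase_state k i n s (i - 1) r c = 0)"

end

theory Submission
  imports Defs "HOL-Number_Theory.Cong"
begin

(* Starting from a uniform board, every row stays constant along the cylinder during the chase,
   so the chase is governed by the number p r of presses in row r, taken as an integer:
   p (r + 2) = q - p r - 3 p (r + 1), because row r + 2 must cancel the value -q + p r + 3 p (r + 1)
   left in row r + 1. Cassini's identity gives p (r + 1) = (-1)^(r + 1) F r F (r + 1) q, and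
   after the chase only the last row can still be lit, with value -p (i + 1). So the game is
   one-pass solvable iff k divides q F i F (i + 1), which holds as soon as the restricted period
   divides i or i + 1. *)

lemma fib_cong_backward:
  fixes k :: nat
  assumes "[fib (j + t) = fib (l + t)] (mod k)"
    and "[fib (Suc (j + t)) = fib (Suc (l + t))] (mod k)"
  shows "[fib j = fib l] (mod k) \<and> [fib (Suc j) = fib (Suc l)] (mod k)"
  using assms
proof (induction t)
  case 0
  then show ?case by simp
next
  case (Suc t)
  have next_pair: "[fib (Suc (j + t)) = fib (Suc (l + t))] (mod k)"
    using Suc.prems(1) by simp
  have "[fib (Suc (j + t)) + fib (j + t) = fib (Suc (l + t)) + fib (l + t)] (mod k)"
    using Suc.prems(2) by simp
  also have "[fib (Suc (l + t)) + fib (l + t) = fib (Suc (j + t)) + fib (l + t)] (mod k)"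
    using cong_add[OF cong_sym[OF next_pair] cong_refl] .
  finally have "[fib (j + t) = fib (l + t)] (mod k)"
    by (simp only: cong_add_lcancel_nat)
  then show ?case using next_pair by (rule Suc.IH)
qed

lemma fib_dvd_exists:
  fixes k :: nat
  assumes "k > 0"
  shows "\<exists>m>0. k dvd fib m"
proof -
  define pair where "pair j = (fib j mod k, fib (Suc j) mod k)" for j
  have "pair ` {..k * k} \<subseteq> {..<k} \<times> {..<k}"
    using assms by (auto simp: pair_def)
  then have "card (pair ` {..k * k}) \<le> k * k"
    by (metis card_lessThan card_cartesian_product card_mono finite_SigmaI finite_lessThan)
  then have "\<not> inj_on pair {..k * k}"
    by (intro pigeonhole) simp
  then obtain j l where "j < l" "pair j = pair l"
    unfolding inj_on_def by (metis linorder_neqE_nat)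
  then have "[fib (0 + j) = fib (l - j + j)] (mod k)"
    and "[fib (Suc (0 + j)) = fib (Suc (l - j + j))] (mod k)"
    by (simp_all add: pair_def cong_def)
  then have "[fib 0 = fib (l - j)] (mod k)"
    using fib_cong_backward by blast
  then have "k dvd fib (l - j)"
    by (metis cong_0_iff cong_sym fib0)
  with \<open>j < l\<close> show ?thesis
    by (intro exI[of _ "l - j"]) simp
qed

lemma dvd_fib_restricted_period:
  fixes k :: nat
  assumes "k > 0"
  shows "k dvd fib (restricted_period k)"
  using LeastI_ex[OF fib_dvd_exists[OF assms]] by (simp add: restricted_period_def)

lemma fib_dvd_fib:
  "m dvd n \<Longrightarrow> fib m dvd fib n"
  by (metis fib_gcd gcd_nat.absorb1 gcd_dvd2)

lemma dvd_fib_if_restricted_period_dvd: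
  fixes k :: nat
  assumes "k > 0" and "restricted_period k dvd m"
  shows "k dvd fib m"
  using dvd_fib_restricted_period[OF assms(1)] fib_dvd_fib[OF assms(2)] by (rule dvd_trans)

(* Rows 0 and 1 are never pressed; the phantom row 0 makes the recurrence uniform. *)
fun chase_presses :: "int \<Rightarrow> nat \<Rightarrow> int" where
  "chase_presses q 0 = 0"
| "chase_presses q (Suc 0) = 0"
| "chase_presses q (Suc (Suc r)) = q - chase_presses q r - 3 * chase_presses q (Suc r)"

lemma chase_presses_closed_form:
  "chase_presses q (Suc r) = (-1) ^ Suc r * int (fib r) * int (fib (Suc r)) * q"
proof (induction q r rule: chase_presses.induct)
  case 1
  then show ?case by simp
next
  case 2
  then show ?case by simp
next
  case (3 q r)
  define a b where "a = int (fib r)" and "b = int (fib (Suc r))"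
  have cassini: "(-1) ^ r = b\<^sup>2 - a * b - a\<^sup>2"
    using fib_Cassini_int[of r] by (simp add: a_def b_def algebra_simps power2_eq_square)
  have "chase_presses q (Suc (Suc (Suc r))) = q - chase_presses q (Suc r) - 3 * chase_presses q (Suc (Suc r))"
    by simp
  also have "\<dots> = (-1) ^ r * ((-1) ^ r + a * b - 3 * b * (a + b)) * q"
    using 3 by (simp add: a_def b_def algebra_simps)
  also have "(-1) ^ r + a * b - 3 * b * (a + b) = - (a + b) * (a + 2 * b)"
    unfolding cassini by (simp add: algebra_simps power2_eq_square)
  finally show ?case
    by (simp add: a_def b_def algebra_simps)
qed

lemma succ_mod_eq_if:
  fixes n c :: nat
  assumes "c < n"
  shows "(c + 1) mod n = (if c + 1 = n then 0 else c + 1)"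
  using assms by (simp add: mod_Suc)

lemma pred_mod_eq_if:
  fixes n c :: nat
  assumes "c < n"
  shows "(c + n - 1) mod n = (if c = 0 then n - 1 else c - 1)"
  using assms by (cases c) simp_all

lemma card_cyclic_neighbourhood:
  fixes n c' :: nat
  assumes "n \<ge> 3" and "c' < n"
  shows "card {c. c < n \<and> (c' = c \<or> c' = (c + 1) mod n \<or> c = (c' + 1) mod n)} = 3"
proof -
  have "c' = (c + 1) mod n \<longleftrightarrow> c = (c' + n - 1) mod n" if "c < n" for c
    using that assms succ_mod_eq_if[of c n] pred_mod_eq_if[of c' n] by auto
  then have "{c. c < n \<and> (c' = c \<or> c' = (c + 1) mod n \<or> c = (c' + 1) mod n)}
      = {c. c < n \<and> c \<in> {c', (c' + n - 1) mod n, (c' + 1) mod n}}"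
    by blast
  also have "\<dots> = {c', (c' + n - 1) mod n, (c' + 1) mod n}"
    using assms by auto
  also have "card \<dots> = 3"
    using assms succ_mod_eq_if[of c' n] pred_mod_eq_if[of c' n] by auto
  finally show ?thesis .
qed

definition press_weight :: "nat \<Rightarrow> nat \<Rightarrow> int" where
  "press_weight R r = (if r = R then 3 else if r = R + 1 \<or> R = r + 1 then 1 else 0)"

lemma card_affects_in_row:
  assumes "n \<ge> 3" and "R \<in> {1..i}" and "r \<in> {1..i}" and "c' < n"
  shows "int (card {c. c < n \<and> affects i n R c r c'}) = press_weight R r"
proof -
  consider "r = R" | "r = R + 1 \<or> R = r + 1" | "r \<noteq> R" "r \<noteq> R + 1" "R \<noteq> r + 1"
    by blast
  then show ?thesis
  proof cases
    case 1
    then show ?thesis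
      using assms card_cyclic_neighbourhood[of n c'] by (simp add: affects_def press_weight_def)
  next
    case 2
    then have "{c. c < n \<and> affects i n R c r c'} = {c'}"
      using assms by (auto simp: affects_def)
    moreover have "press_weight R r = 1"
      using 2 by (auto simp: press_weight_def)
    ultimately show ?thesis
      by simp
  next
    case 3
    then show ?thesis
      by (simp add: affects_def press_weight_def)
  qed
qed

lemma apply_presses_uniform_row:
  assumes "n \<ge> 3" and "R \<in> {1..i}" and "r \<in> {1..i}" and "c < n"
    and "\<And>c. c < n \<Longrightarrow> Q R c = P" and "\<And>r c. r \<noteq> R \<Longrightarrow> Q r c = 0"
  shows "apply_presses k i n Q s r c = (s r c + press_weight R r * P) mod int k"
proof -
  have row_sum: "(\<Sum>c'<n. if affects i n r' c' r c then Q r' c' else 0)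
      = (if r' = R then \<Sum>c'<n. if affects i n R c' r c then P else 0 else 0)" for r'
    using assms(5,6) by (simp cong: if_cong)
  have "(\<Sum>r'\<in>{1..i}. \<Sum>c'<n. if affects i n r' c' r c then Q r' c' else 0)
      = (\<Sum>r'\<in>{1..i}. if r' = R then \<Sum>c'<n. if affects i n R c' r c then P else 0 else 0)"
    unfolding row_sum ..
  also have "\<dots> = (\<Sum>c'<n. if affects i n R c' r c then P else 0)"
    using assms(2) by simp
  also have "\<dots> = int (card {c'. c' < n \<and> affects i n R c' r c}) * P"
    by (simp add: sum.If_cases Int_def)
  also have "\<dots> = press_weight R r * P"
    using card_affects_in_row[OF assms(1-4)] by simp
  finally show ?thesis
    by (simp add: apply_presses_def)
qed

definition chase_row_value :: "int \<Rightarrow> nat \<Rightarrow> nat \<Rightarrow> int" where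
  "chase_row_value q m r =
     (if r \<le> m then 0
      else if r = m + 1 then - chase_presses q (m + 2)
      else if r = m + 2 then chase_presses q (m + 1) - q
      else - q)"

lemma chase_row_value_Suc:
  "chase_row_value q (Suc m) r = chase_row_value q m r + press_weight (m + 2) r * chase_presses q (m + 2)"
  by (auto simp: chase_row_value_def press_weight_def)

lemma chase_state_eq_row_value:
  assumes "n \<ge> 3" and "m < i" and "r \<in> {1..i}" and "c < n"
  shows "chase_state k i n (\<lambda>_ _. (- q) mod int k) m r c = chase_row_value q m r mod int k"
  using assms(2-4)
proof (induction m arbitrary: r c)
  case 0
  then show ?case
    by (simp add: chase_row_value_def)
next
  case (Suc m)
  define st where "st = chase_state k i n (\<lambda>_ _. (- q) mod int k) m"
  define P where "P = (- st (m + 1) 0) mod int k"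
  have st: "st r' c' = chase_row_value q m r' mod int k" if "r' \<in> {1..i}" "c' < n" for r' c'
    using Suc.IH[OF _ that] Suc.prems(1) by (simp add: st_def)
  have "chase_row_value q m (m + 1) = - chase_presses q (m + 2)"
    by (simp add: chase_row_value_def del: chase_presses.simps)
  then have P_eq: "P = chase_presses q (m + 2) mod int k"
    using st[of "m + 1" 0] Suc.prems(1) assms(1) by (simp add: P_def mod_simps del: chase_presses.simps)
  have presses: "chase_row_presses k (m + 2) st (m + 2) c' = P" if "c' < n" for c'
    using st[of "m + 1" c'] st[of "m + 1" 0] that assms(1) Suc.prems(1)
    by (simp add: chase_row_presses_def P_def)
  have "chase_state k i n (\<lambda>_ _. (- q) mod int k) (Suc m) r c
      = apply_presses k i n (chase_row_presses k (m + 2) st) st r c"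
    by (simp add: st_def Let_def)
  also have "\<dots> = (st r c + press_weight (m + 2) r * P) mod int k"
    using assms(1) Suc.prems presses
    by (intro apply_presses_uniform_row) (auto simp: chase_row_presses_def)
  also have "\<dots> = (chase_row_value q m r + press_weight (m + 2) r * chase_presses q (m + 2)) mod int k"
    using st[OF Suc.prems(2,3)] by (simp add: P_eq del: chase_presses.simps)
      (metis mod_add_left_eq mod_add_right_eq mod_mult_right_eq)
  also have "\<dots> = chase_row_value q (Suc m) r mod int k"
    by (simp add: chase_row_value_Suc)
  finally show ?case .
qed

lemma one_pass_solvable_uniform_iff:
  assumes "n \<ge> 3" and "i \<ge> 1"
  shows "one_pass_solvable k i n (\<lambda>_ _. (- q) mod int k)
     \<longleftrightarrow> int k dvd int (fib i) * int (fib (Suc i)) * q"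
proof -
  have "one_pass_solvable k i n (\<lambda>_ _. (- q) mod int k)
     \<longleftrightarrow> (\<forall>r\<in>{1..i}. \<forall>c<n. chase_row_value q (i - 1) r mod int k = 0)"
    using assms chase_state_eq_row_value[of n "i - 1" i _ _ k q] by (simp add: one_pass_solvable_def)
  also have "\<dots> \<longleftrightarrow> (\<forall>r\<in>{1..i}. chase_row_value q (i - 1) r mod int k = 0)"
    using assms(1) by (metis (no_types, lifting) le_less_trans nat_less_le zero_less_numeral)
  also have "\<dots> \<longleftrightarrow> chase_presses q (Suc i) mod int k = 0"
    using assms by (auto simp: chase_row_value_def)
  also have "\<dots> \<longleftrightarrow> int k dvd int (fib i) * int (fib (Suc i)) * q"
    by (simp add: chase_presses_closed_form mult.assoc dvd_eq_mod_eq_0[symmetric] dvd_mult_unit_iff')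
  finally show ?thesis .
qed

theorem theorem3:
  fixes k q n i :: nat
  assumes "k \<ge> 2" and "q \<in> {1..k-1}" and "n \<ge> 3" and "i \<ge> 1"
    and "i mod restricted_period k = 0 \<or> (i + 1) mod restricted_period k = 0"
  shows "one_pass_solvable k i n (\<lambda>r c. int k - int q)"
proof -
  have "0 < q" and "q < k"
    using assms(1,2) by auto
  then have initial: "(\<lambda>r c. int k - int q) = (\<lambda>_ _. (- int q) mod int k)"
    by (simp add: zmod_zminus1_eq_if flip: of_nat_mod)
  have "k dvd fib i \<or> k dvd fib (Suc i)"
    using assms(1,5) dvd_fib_if_restricted_period_dvd[of k] by auto
  then have "int k dvd int (fib i) * int (fib (Suc i)) * int q"
    by (metis dvd_mult dvd_mult2 of_nat_dvd_iff)
  then show ?thesis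
    unfolding initial using one_pass_solvable_uniform_iff[OF assms(3,4)] by simp
qed

end
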